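(* Let $\widetilde{\Sigma}=\widetilde{\Sigma}_1\uplus\cdots\uplus\widetilde{\Sigma}_n$ with pairwise disjoint visibly pushdown alphabets, and let $P_1\subseteq\widetilde{\Sigma}_1^*,\ldots,P_n\subseteq\widetilde{\Sigma}_n^*$ be well-matched visibly pushdown languages. Let $\Sigma'\subseteq\Sigma^{\mathsf{call}}\cup\Sigma^{\mathsf{ret}}$ be such that for all $i$ and all $c,r\in\widetilde{\Sigma}_i$ that are a matching call–return pair in some word of $P_i$, $c\in\Sigma'\Leftrightarrow r\in\Sigma'$. Let $f:\widetilde{\Sigma}^*\to\widetilde{\Sigma}^*$ be a letter-to-letter string homomorphism with $f(a)\in\Sigma^{\mathsf{int}}_i$ if $a\in\Sigma'\cap\widetilde{\Sigma}_i$ (for any $i$), and $f(a)=a$ otherwise. If $\prec$ is a visibly pushdown contextual order on $\widetilde{\Sigma}$, then there is a visibly pushdown contextual order $\prec'$ such that $\mathrm{red}_{\prec'}(P_1\bowtie\cdots\bowtie P_n)=\mathrm{red}_{f(\prec)}(P_1\bowtie\cdots\bowtie P_n)$.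
   Context: A visibly pushdown (VP) alphabet is a finite alphabet partitioned into calls $\Sigma^{\mathsf{call}}$, returns $\Sigma^{\mathsf{ret}}$, internals $\Sigma^{\mathsf{int}}$; subscripts $i$ refer to $\widetilde{\Sigma}_i$, and $\widetilde{\Sigma}$ has the unions. Calls and returns are matched like opening and closing parentheses (internals ignored); a word is well-matched if all are matched. A visibly pushdown automaton (VPA) is a pushdown automaton with bottom symbol $\bot$ pushing one non-$\bot$ symbol on each call, popping the top on each return (reading $\bot$ on empty stack without removing it), stack unchanged on internals; deterministic = one initial state and at most one transition per configuration and letter; complete = at least one. Shuffle $P_1\parallel\cdots\parallel P_n=\{w:\Pi_{\widetilde{\Sigma}_i}(w)\in P_i\ \forall i\}$; a word is well-nested if every matched pair consists of letters from the same $\widetilde{\Sigma}_k$; $P_1\bowtie\cdots\bowtie P_n$ is the set of well-nested words of the shuffle. $\mathbb{I}=\{(a,b):a\in\widetilde{\Sigma}_i,b\in\widetilde{\Sigma}_j,i\ne j\}$, $\equiv_{\mathbb{I}}$ the least reflexive transitive relation with $uabv\equiv_{\mathbb{I}}ubav$ for $(a,b)\in\mathbb{I}$. A contextual order is a map $\prec$ from $\widetilde{\Sigma}^*$ to strict partial orders on $\widetilde{\Sigma}$; it induces $\preceq$: $\sigma\preceq\rho$ iff $\sigma$ is a prefix of $\rho$ or $\sigma=\alpha a\beta$, $\rho=\alpha b\gamma$ with $a\prec_\alpha b$. $\mathrm{red}_\prec(L)=\{w\in L:\forall u\in L,(u\equiv_{\mathbb{I}}w\wedge u\preceq w)\Rightarrow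 u=w\}$. A contextual order is visibly pushdown (VPO) if its values are strict total orders and there is a complete deterministic VPA $A$ over $\widetilde{\Sigma}$ and a map $\mathsf{ord}$ from states of $A$ to strict total orders with $\prec_w=\mathsf{ord}(q)$, $q$ the state reached after reading $w$. The contextual order $f(\prec)$ is defined by $a\ f(\prec)_w\ b\iff f(a)\prec_{f(w)}f(b)$. *)

theory Defs
  imports Main
begin

text \<open>A family of VP alphabets is given by index sets Sig i (i < n) of letters, together
with global sets Call, Ret, Intl of call, return and internal letters (partitioning the
union alphabet). Letters that are neither calls nor returns are internal.\<close>

definition SigU :: "nat \<Rightarrow> (nat \<Rightarrow> 'a set) \<Rightarrow> 'a set" where
  "SigU n Sig = (\<Union>i<n. Sig i)"

inductive well_matched :: "'a set \<Rightarrow> 'a set \<Rightarrow> 'a list \<Rightarrow> bool" for Call Ret where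
  wm_nil: "well_matched Call Ret []"
| wm_int: "a \<notin> Call \<Longrightarrow> a \<notin> Ret \<Longrightarrow> well_matched Call Ret [a]"
| wm_app: "well_matched Call Ret u \<Longrightarrow> well_matched Call Ret v \<Longrightarrow> well_matched Call Ret (u @ v)"
| wm_nest: "c \<in> Call \<Longrightarrow> r \<in> Ret \<Longrightarrow> well_matched Call Ret u \<Longrightarrow> well_matched Call Ret (c # u @ [r])"

definition matched_pair :: "'a set \<Rightarrow> 'a set \<Rightarrow> 'a list \<Rightarrow> nat \<Rightarrow> nat \<Rightarrow> bool" where
  "matched_pair Call Ret w k l \<longleftrightarrow> k < l \<and> l < length w \<and> w ! k \<in> Call \<and> w ! l \<in> Ret \<and>
     well_matched Call Ret (take (l - Suc k) (drop (Suc k) w))"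

definition matching_letters_in :: "'a set \<Rightarrow> 'a set \<Rightarrow> 'a list set \<Rightarrow> 'a \<Rightarrow> 'a \<Rightarrow> bool" where
  "matching_letters_in Call Ret L c r \<longleftrightarrow>
     (\<exists>w\<in>L. \<exists>k l. matched_pair Call Ret w k l \<and> w ! k = c \<and> w ! l = r)"

definition well_nested :: "'a set \<Rightarrow> 'a set \<Rightarrow> nat \<Rightarrow> (nat \<Rightarrow> 'a set) \<Rightarrow> 'a list \<Rightarrow> bool" where
  "well_nested Call Ret n Sig w \<longleftrightarrow>
     (\<forall>k l. matched_pair Call Ret w k l \<longrightarrow> (\<exists>m<n. w ! k \<in> Sig m \<and> w ! l \<in> Sig m))"

definition shuffle :: "nat \<Rightarrow> (nat \<Rightarrow> 'a set) \<Rightarrow> (nat \<Rightarrow> 'a list set) \<Rightarrow> 'a list set" where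
  "shuffle n Sig P = {w \<in> lists (SigU n Sig). \<forall>i<n. filter (\<lambda>a. a \<in> Sig i) w \<in> P i}"

definition bowtie :: "'a set \<Rightarrow> 'a set \<Rightarrow> nat \<Rightarrow> (nat \<Rightarrow> 'a set) \<Rightarrow> (nat \<Rightarrow> 'a list set) \<Rightarrow> 'a list set" where
  "bowtie Call Ret n Sig P = {w \<in> shuffle n Sig P. well_nested Call Ret n Sig w}"

definition indep :: "nat \<Rightarrow> (nat \<Rightarrow> 'a set) \<Rightarrow> 'a \<Rightarrow> 'a \<Rightarrow> bool" where
  "indep n Sig a b \<longleftrightarrow> (\<exists>i<n. \<exists>j<n. i \<noteq> j \<and> a \<in> Sig i \<and> b \<in> Sig j)"

definition swap_step :: "nat \<Rightarrow> (nat \<Rightarrow> 'a set) \<Rightarrow> 'a list \<Rightarrow> 'a list \<Rightarrow> bool" where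
  "swap_step n Sig x y \<longleftrightarrow>
     (\<exists>u v a b. indep n Sig a b \<and> x = u @ [a, b] @ v \<and> y = u @ [b, a] @ v)"

definition trace_eq :: "nat \<Rightarrow> (nat \<Rightarrow> 'a set) \<Rightarrow> 'a list \<Rightarrow> 'a list \<Rightarrow> bool" where
  "trace_eq n Sig = (swap_step n Sig)\<^sup>*\<^sup>*"

definition ctx_le :: "('a list \<Rightarrow> 'a \<Rightarrow> 'a \<Rightarrow> bool) \<Rightarrow> 'a list \<Rightarrow> 'a list \<Rightarrow> bool" where
  "ctx_le prec \<sigma> \<rho> \<longleftrightarrow> (\<exists>t. \<rho> = \<sigma> @ t) \<or>
     (\<exists>\<alpha> a \<beta> b \<gamma>. \<sigma> = \<alpha> @ a # \<beta> \<and> \<rho> = \<alpha> @ b # \<gamma> \<and> prec \<alpha> a b)"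

definition red :: "nat \<Rightarrow> (nat \<Rightarrow> 'a set) \<Rightarrow> ('a list \<Rightarrow> 'a \<Rightarrow> 'a \<Rightarrow> bool) \<Rightarrow> 'a list set \<Rightarrow> 'a list set" where
  "red n Sig prec L = {w \<in> L. \<forall>u\<in>L. (trace_eq n Sig u w \<and> ctx_le prec u w) \<longrightarrow> u = w}"

definition img_order :: "('a \<Rightarrow> 'a) \<Rightarrow> ('a list \<Rightarrow> 'a \<Rightarrow> 'a \<Rightarrow> bool) \<Rightarrow> 'a list \<Rightarrow> 'a \<Rightarrow> 'a \<Rightarrow> bool" where
  "img_order h prec w a b \<longleftrightarrow> prec (map h w) (h a) (h b)"

definition strict_total_on :: "'a set \<Rightarrow> ('a \<Rightarrow> 'a \<Rightarrow> bool) \<Rightarrow> bool" where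
  "strict_total_on A R \<longleftrightarrow> (\<forall>a\<in>A. \<not> R a a) \<and>
     (\<forall>a\<in>A. \<forall>b\<in>A. \<forall>c\<in>A. R a b \<longrightarrow> R b c \<longrightarrow> R a c) \<and>
     (\<forall>a\<in>A. \<forall>b\<in>A. a \<noteq> b \<longrightarrow> R a b \<or> R b a)"

text \<open>States and stack symbols are natural numbers; the bottom symbol is represented by
None (i.e. it is distinct from all pushable stack symbols). A configuration is a state
and a stack (list, top first). Reading a return on the empty stack reads the bottom
symbol and leaves the stack unchanged.\<close>

fun dvpa_run :: "'a set \<Rightarrow> 'a set \<Rightarrow> (nat \<Rightarrow> 'a \<Rightarrow> nat \<times> nat) \<Rightarrow> (nat \<Rightarrow> 'a \<Rightarrow> nat option \<Rightarrow> nat)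
    \<Rightarrow> (nat \<Rightarrow> 'a \<Rightarrow> nat) \<Rightarrow> nat \<times> nat list \<Rightarrow> 'a list \<Rightarrow> nat \<times> nat list" where
  "dvpa_run Call Ret dC dR dI c [] = c"
| "dvpa_run Call Ret dC dR dI (q, s) (a # w) =
     (if a \<in> Call then dvpa_run Call Ret dC dR dI (fst (dC q a), snd (dC q a) # s) w
      else if a \<in> Ret then dvpa_run Call Ret dC dR dI
               (dR q a (case s of [] \<Rightarrow> None | g # _ \<Rightarrow> Some g), tl s) w
      else dvpa_run Call Ret dC dR dI (dI q a, s) w)"

definition is_dvpa :: "'a set \<Rightarrow> 'a set \<Rightarrow> 'a set \<Rightarrow> nat set \<Rightarrow> nat set \<Rightarrow> nat
    \<Rightarrow> (nat \<Rightarrow> 'a \<Rightarrow> nat \<times> nat) \<Rightarrow> (nat \<Rightarrow> 'a \<Rightarrow> nat option \<Rightarrow> nat) \<Rightarrow> (nat \<Rightarrow> 'a \<Rightarrow> nat) \<Rightarrow> bool" where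
  "is_dvpa A Call Ret Q \<Gamma> q0 dC dR dI \<longleftrightarrow> finite Q \<and> finite \<Gamma> \<and> q0 \<in> Q \<and>
     (\<forall>q\<in>Q. \<forall>a\<in>A \<inter> Call. fst (dC q a) \<in> Q \<and> snd (dC q a) \<in> \<Gamma>) \<and>
     (\<forall>q\<in>Q. \<forall>a\<in>A \<inter> Ret. \<forall>g\<in>insert None (Some ` \<Gamma>). dR q a g \<in> Q) \<and>
     (\<forall>q\<in>Q. \<forall>a\<in>A - Call - Ret. dI q a \<in> Q)"

definition vpo :: "'a set \<Rightarrow> 'a set \<Rightarrow> 'a set \<Rightarrow> ('a list \<Rightarrow> 'a \<Rightarrow> 'a \<Rightarrow> bool) \<Rightarrow> bool" where
  "vpo A Call Ret prec \<longleftrightarrow> (\<exists>Q \<Gamma> q0 dC dR dI ord.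
     is_dvpa A Call Ret Q \<Gamma> q0 dC dR dI \<and>
     (\<forall>q\<in>Q. strict_total_on A (ord q)) \<and>
     (\<forall>w\<in>lists A. \<forall>a\<in>A. \<forall>b\<in>A.
        prec w a b \<longleftrightarrow> ord (fst (dvpa_run Call Ret dC dR dI (q0, []) w)) a b))"

inductive nvpa_reach :: "'a set \<Rightarrow> 'a set \<Rightarrow> (nat \<times> 'a \<times> nat \<times> nat) set
    \<Rightarrow> (nat \<times> 'a \<times> nat option \<times> nat) set \<Rightarrow> (nat \<times> 'a \<times> nat) set
    \<Rightarrow> nat \<times> nat list \<Rightarrow> 'a list \<Rightarrow> nat \<times> nat list \<Rightarrow> bool"
  for Call Ret dC dR dI where
  nr_nil: "nvpa_reach Call Ret dC dR dI c [] c"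
| nr_call: "a \<in> Call \<Longrightarrow> (q, a, q', g) \<in> dC \<Longrightarrow> nvpa_reach Call Ret dC dR dI (q', g # s) w c
            \<Longrightarrow> nvpa_reach Call Ret dC dR dI (q, s) (a # w) c"
| nr_ret_bot: "a \<in> Ret \<Longrightarrow> (q, a, None, q') \<in> dR \<Longrightarrow> nvpa_reach Call Ret dC dR dI (q', []) w c
            \<Longrightarrow> nvpa_reach Call Ret dC dR dI (q, []) (a # w) c"
| nr_ret: "a \<in> Ret \<Longrightarrow> (q, a, Some g, q') \<in> dR \<Longrightarrow> nvpa_reach Call Ret dC dR dI (q', s) w c
            \<Longrightarrow> nvpa_reach Call Ret dC dR dI (q, g # s) (a # w) c"
| nr_int: "a \<notin> Call \<Longrightarrow> a \<notin> Ret \<Longrightarrow> (q, a, q') \<in> dI \<Longrightarrow> nvpa_reach Call Ret dC dR dI (q', s) w c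
            \<Longrightarrow> nvpa_reach Call Ret dC dR dI (q, s) (a # w) c"

definition is_vpl :: "'a set \<Rightarrow> 'a set \<Rightarrow> 'a set \<Rightarrow> 'a list set \<Rightarrow> bool" where
  "is_vpl A Call Ret L \<longleftrightarrow> (\<exists>Q \<Gamma> I F dC dR dI.
     finite Q \<and> finite \<Gamma> \<and> I \<subseteq> Q \<and> F \<subseteq> Q \<and>
     dC \<subseteq> Q \<times> A \<times> Q \<times> \<Gamma> \<and> dR \<subseteq> Q \<times> A \<times> insert None (Some ` \<Gamma>) \<times> Q \<and> dI \<subseteq> Q \<times> A \<times> Q \<and>
     L = {w \<in> lists A. \<exists>q0\<in>I. \<exists>qf\<in>F. \<exists>s. nvpa_reach Call Ret dC dR dI (q0, []) w (qf, s)})"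

end

theory Submission
  imports Defs
begin

(* The new order compares two letters by the order the given VPA assigns to their h-images in
   the state it reaches on the h-image of the context, and breaks ties by an arbitrary injective
   numbering of the letters.  A deterministic VPA reading the original word can track that
   state: it treats each call and return in Sp as the internal letter h a, pushing a marker for
   a hidden call so that its stack stays in step with the original one.  The simulation is sound
   on prefixes of the well-nested shuffle, because there every return in Sp matches a call in Sp
   and vice versa.  Ties only occur between distinct letters of one component, and two
   trace-equivalent words never first differ in two such letters, so the tie-break does not
   affect the reduced words. *)

section \<open>Pending calls in well-nested words\<close>

definition pending_calls :: "'a set \<Rightarrow> 'a set \<Rightarrow> 'a list \<Rightarrow> 'a list" where
  "pending_calls Call Ret x =
     foldl (\<lambda>st a. if a \<in> Call then a # st else if a \<in> Ret then tl st else st) [] x"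

lemma pending_calls_Nil [simp]: "pending_calls Call Ret [] = []"
  by (simp add: pending_calls_def)

lemma pending_calls_snoc:
  "pending_calls Call Ret (x @ [a]) =
     (if a \<in> Call then a # pending_calls Call Ret x
      else if a \<in> Ret then tl (pending_calls Call Ret x) else pending_calls Call Ret x)"
  by (simp add: pending_calls_def)

lemma pending_calls_ConsD:
  assumes "pending_calls Call Ret x = c # t"
  shows "\<exists>x1 x2. x = x1 @ c # x2 \<and> c \<in> Call \<and> well_matched Call Ret x2
                 \<and> pending_calls Call Ret x1 = t"
  using assms
proof (induction "length x" arbitrary: x c t rule: less_induct)
  case less
  show ?case
  proof (cases x rule: rev_exhaust)
    case Nil with less.prems show ?thesis by simp
  next
    case (snoc x' a)
    consider "a \<in> Call" | "a \<notin> Call" "a \<in> Ret" | "a \<notin> Call" "a \<notin> Ret" by blast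
    then show ?thesis
    proof cases
      case 1
      with less.prems snoc show ?thesis
        by (intro exI[of _ x'] exI[of _ "[]"]) (auto simp: pending_calls_snoc intro: wm_nil)
    next
      case 2
      with less.prems snoc obtain d where "pending_calls Call Ret x' = d # c # t"
        by (cases "pending_calls Call Ret x'") (auto simp: pending_calls_snoc)
      then obtain y1 y2 where y: "x' = y1 @ d # y2" "d \<in> Call" "well_matched Call Ret y2"
          and "pending_calls Call Ret y1 = c # t"
        using less.hyps[of x'] snoc by fastforce
      then obtain x1 x2 where xx: "y1 = x1 @ c # x2" "c \<in> Call" "well_matched Call Ret x2"
          "pending_calls Call Ret x1 = t"
        using less.hyps[of y1] snoc y(1) by fastforce
      have "well_matched Call Ret (x2 @ d # y2 @ [a])"
        using xx y 2 by (intro wm_app wm_nest) auto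
      with snoc y xx show ?thesis by (intro exI[of _ x1] exI[of _ "x2 @ d # y2 @ [a]"]) auto
    next
      case 3
      with less.prems snoc have "pending_calls Call Ret x' = c # t"
        by (simp add: pending_calls_snoc)
      then obtain x1 x2 where xx: "x' = x1 @ c # x2" "c \<in> Call"
          "well_matched Call Ret x2" "pending_calls Call Ret x1 = t"
        using less.hyps[of x'] snoc by fastforce
      have "well_matched Call Ret (x2 @ [a])"
        using xx 3 by (intro wm_app wm_int) auto
      with snoc xx show ?thesis by (intro exI[of _ x1] exI[of _ "x2 @ [a]"]) auto
    qed
  qed
qed

lemma matched_pair_pending_call:
  assumes "r \<in> Ret" and "pending_calls Call Ret x = c # t"
  shows "\<exists>k. matched_pair Call Ret (x @ r # y) k (length x) \<and> (x @ r # y) ! k = c"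
proof -
  obtain x1 x2 where "x = x1 @ c # x2" "c \<in> Call" "well_matched Call Ret x2"
    using pending_calls_ConsD[OF assms(2)] by blast
  with assms(1) show ?thesis
    by (intro exI[of _ "length x1"]) (auto simp: matched_pair_def nth_append)
qed

lemma well_nested_prefix:
  assumes "well_nested Call Ret n Sig (x @ z)"
  shows "well_nested Call Ret n Sig x"
proof -
  have "matched_pair Call Ret (x @ z) k l \<and> (x @ z) ! k = x ! k \<and> (x @ z) ! l = x ! l"
    if "matched_pair Call Ret x k l" for k l
    using that by (auto simp: matched_pair_def nth_append)
  with assms show ?thesis unfolding well_nested_def by metis
qed

lemma well_nested_pending_call:
  assumes "well_nested Call Ret n Sig (x @ r # y)" and "r \<in> Ret"
    and "pending_calls Call Ret x = c # t"
  shows "\<exists>m<n. c \<in> Sig m \<and> r \<in> Sig m"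
  using matched_pair_pending_call[OF assms(2,3), of y] assms(1)
  unfolding well_nested_def by fastforce

lemma pending_calls_filter:
  assumes disj: "\<forall>i<n. \<forall>j<n. i \<noteq> j \<longrightarrow> Sig i \<inter> Sig j = {}"
    and "well_nested Call Ret n Sig x" and i: "i < n"
  shows "pending_calls Call Ret (filter (\<lambda>a. a \<in> Sig i) x)
           = filter (\<lambda>a. a \<in> Sig i) (pending_calls Call Ret x)"
  using assms(2)
proof (induction x rule: rev_induct)
  case Nil then show ?case by simp
next
  case (snoc a x)
  then have IH: "pending_calls Call Ret (filter (\<lambda>a. a \<in> Sig i) x)
                   = filter (\<lambda>a. a \<in> Sig i) (pending_calls Call Ret x)"
    using well_nested_prefix by blast
  show ?case
  proof (cases "a \<notin> Call \<and> a \<in> Ret \<and> pending_calls Call Ret x \<noteq> []")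
    case True
    then obtain c t where ct: "pending_calls Call Ret x = c # t"
      by (cases "pending_calls Call Ret x") auto
    then obtain m where "m < n" "c \<in> Sig m" "a \<in> Sig m"
      using well_nested_pending_call[of Call Ret n Sig x a "[]"] snoc.prems True by auto
    then have "a \<in> Sig i \<longleftrightarrow> c \<in> Sig i" using disj i by blast
    with IH True ct show ?thesis by (auto simp: pending_calls_snoc)
  qed (use IH in \<open>auto simp: pending_calls_snoc\<close>)
qed

definition match_closed :: "'a set \<Rightarrow> 'a set \<Rightarrow> 'a set \<Rightarrow> 'a list \<Rightarrow> bool" where
  "match_closed Call Ret S w \<longleftrightarrow> (\<forall>x r y c t. w = x @ r # y \<longrightarrow> r \<in> Ret \<longrightarrow>
     pending_calls Call Ret x = c # t \<longrightarrow> (c \<in> S \<longleftrightarrow> r \<in> S))"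

lemma match_closed_prefix: "match_closed Call Ret S (x @ z) \<Longrightarrow> match_closed Call Ret S x"
  unfolding match_closed_def by (metis append.assoc append_Cons)

lemma bowtie_match_closed:
  assumes disj: "\<forall>i<n. \<forall>j<n. i \<noteq> j \<longrightarrow> Sig i \<inter> Sig j = {}"
    and S_match: "\<forall>i<n. \<forall>c\<in>Sig i. \<forall>r\<in>Sig i.
                    matching_letters_in Call Ret (P i) c r \<longrightarrow> (c \<in> S \<longleftrightarrow> r \<in> S)"
    and w: "w \<in> bowtie Call Ret n Sig P"
  shows "match_closed Call Ret S w"
  unfolding match_closed_def
proof (intro allI impI)
  fix x r y c t
  assume split: "w = x @ r # y" and r: "r \<in> Ret" and ct: "pending_calls Call Ret x = c # t"
  have wn: "well_nested Call Ret n Sig w" using w by (simp add: bowtie_def)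
  then obtain m where m: "m < n" "c \<in> Sig m" "r \<in> Sig m"
    using well_nested_pending_call[of Call Ret n Sig x r y c t] split r ct by blast
  let ?p = "filter (\<lambda>a. a \<in> Sig m)"
  have "well_nested Call Ret n Sig x" using wn split well_nested_prefix by blast
  then have pf: "pending_calls Call Ret (?p x) = c # ?p t"
    using pending_calls_filter[OF disj _ m(1)] ct m by simp
  obtain k where "matched_pair Call Ret (?p x @ r # ?p y) k (length (?p x))"
      and "(?p x @ r # ?p y) ! k = c"
    using matched_pair_pending_call[OF r pf, of "?p y"] by blast
  moreover have "?p w = ?p x @ r # ?p y" "?p w \<in> P m"
    using split m w by (auto simp: bowtie_def shuffle_def)
  ultimately have "matching_letters_in Call Ret (P m) c r"
    unfolding matching_letters_in_def by (metis nth_append_length)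
  then show "c \<in> S \<longleftrightarrow> r \<in> S" using S_match m by blast
qed

section \<open>Hiding calls and returns in a deterministic VPA\<close>

lemma dvpa_run_append:
  "dvpa_run Call Ret dC dR dI c (x @ y) = dvpa_run Call Ret dC dR dI (dvpa_run Call Ret dC dR dI c x) y"
proof (induction x arbitrary: c)
  case (Cons a x)
  obtain q s where "c = (q, s)" by fastforce
  with Cons show ?case by simp
qed simp

(* The hiding automaton pushes the marker 0 for a hidden call and Suc g for a stack symbol g of
   the original automaton.  A visible return never finds a marker on top in a match-closed word,
   so the value chosen for Some 0 in hide_ret is irrelevant. *)

definition hide_call :: "'a set \<Rightarrow> ('a \<Rightarrow> 'a) \<Rightarrow> (nat \<Rightarrow> 'a \<Rightarrow> nat \<times> nat) \<Rightarrow> (nat \<Rightarrow> 'a \<Rightarrow> nat)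
    \<Rightarrow> nat \<Rightarrow> 'a \<Rightarrow> nat \<times> nat" where
  "hide_call S h dC dI q a =
     (if a \<in> S then (dI q (h a), 0) else (fst (dC q a), Suc (snd (dC q a))))"

definition hide_ret :: "'a set \<Rightarrow> ('a \<Rightarrow> 'a) \<Rightarrow> (nat \<Rightarrow> 'a \<Rightarrow> nat option \<Rightarrow> nat) \<Rightarrow> (nat \<Rightarrow> 'a \<Rightarrow> nat)
    \<Rightarrow> nat \<Rightarrow> 'a \<Rightarrow> nat option \<Rightarrow> nat" where
  "hide_ret S h dR dI q a g = (if a \<in> S then dI q (h a) else
     (case g of None \<Rightarrow> dR q a None | Some 0 \<Rightarrow> q | Some (Suc g') \<Rightarrow> dR q a (Some g')))"

definition unmark :: "nat list \<Rightarrow> nat list" where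
  "unmark s = map (\<lambda>g. g - 1) (filter (\<lambda>g. g \<noteq> 0) s)"

lemma is_dvpa_hide:
  assumes dv: "is_dvpa A Call Ret Q \<Gamma> q0 dC dR dI"
    and hS: "\<forall>a\<in>A \<inter> S. h a \<in> A - Call - Ret"
  shows "is_dvpa A Call Ret Q (insert 0 (Suc ` \<Gamma>)) q0 (hide_call S h dC dI) (hide_ret S h dR dI) dI"
proof -
  have "hide_ret S h dR dI q a g \<in> Q"
    if "q \<in> Q" "a \<in> A \<inter> Ret" "g \<in> insert None (Some ` insert 0 (Suc ` \<Gamma>))" for q a g
    using that dv hS by (cases "a \<in> S") (auto simp: hide_ret_def is_dvpa_def)
  with assms show ?thesis by (auto simp: is_dvpa_def hide_call_def)
qed

lemma hide_run_markers:
  "map (\<lambda>g. g = 0) (snd (dvpa_run Call Ret (hide_call S h dC dI) (hide_ret S h dR dI) dI (q, []) x))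
     = map (\<lambda>c. c \<in> S) (pending_calls Call Ret x)"
proof (induction x rule: rev_induct)
  case (snoc a x)
  let ?run = "dvpa_run Call Ret (hide_call S h dC dI) (hide_ret S h dR dI) dI"
  obtain q' s where run: "?run (q, []) x = (q', s)" by fastforce
  then have step: "?run (q, []) (x @ [a]) = ?run (q', s) [a]" by (simp add: dvpa_run_append)
  have "snd (hide_call S h dC dI q' a) = 0 \<longleftrightarrow> a \<in> S" by (simp add: hide_call_def)
  with snoc.IH run show ?case unfolding step by (auto simp: pending_calls_snoc map_tl)
qed simp

lemma hide_step:
  assumes hS: "a \<in> S \<Longrightarrow> h a \<notin> Call \<and> h a \<notin> Ret" and hid: "a \<notin> S \<Longrightarrow> h a = a"
    and S: "S \<subseteq> Call \<union> Ret"
    and top: "a \<in> Ret \<Longrightarrow> s \<noteq> [] \<Longrightarrow> (hd s = 0 \<longleftrightarrow> a \<in> S)"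
  shows "dvpa_run Call Ret dC dR dI (q, unmark s) [h a]
           = apsnd unmark (dvpa_run Call Ret (hide_call S h dC dI) (hide_ret S h dR dI) dI (q, s) [a])"
proof -
  consider "a \<in> S" "a \<in> Call" | "a \<in> S" "a \<notin> Call" "a \<in> Ret" | "a \<notin> S" by (use S in blast)
  then show ?thesis
  proof cases
    case 1 with hS show ?thesis by (simp add: hide_call_def unmark_def)
  next
    case 2
    with hS top have "unmark (tl s) = unmark s" by (cases s) (auto simp: unmark_def)
    with 2 hS show ?thesis by (simp add: hide_ret_def)
  next
    case 3
    have "a \<in> Ret \<Longrightarrow> s \<noteq> [] \<Longrightarrow> hd s \<noteq> 0" using top 3 by blast
    with 3 hid show ?thesis
      by (cases s) (auto simp: hide_call_def hide_ret_def unmark_def split: nat.split)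
  qed
qed

lemma hide_run_simulates:
  assumes hS: "\<forall>a\<in>A \<inter> S. h a \<notin> Call \<and> h a \<notin> Ret" and hid: "\<forall>a\<in>A - S. h a = a"
    and S: "S \<subseteq> Call \<union> Ret"
    and "x \<in> lists A" and "match_closed Call Ret S x"
  shows "dvpa_run Call Ret dC dR dI (q, []) (map h x)
           = apsnd unmark (dvpa_run Call Ret (hide_call S h dC dI) (hide_ret S h dR dI) dI (q, []) x)"
  using assms(4,5)
proof (induction x rule: rev_induct)
  case (snoc a x)
  let ?run = "dvpa_run Call Ret (hide_call S h dC dI) (hide_ret S h dR dI) dI (q, [])"
  obtain q' s where run: "?run x = (q', s)" by fastforce
  have "hd s = 0 \<longleftrightarrow> a \<in> S" if "a \<in> Ret" "s \<noteq> []"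
  proof -
    obtain c t where "pending_calls Call Ret x = c # t" "hd s = 0 \<longleftrightarrow> c \<in> S"
      using hide_run_markers[of Call Ret S h dC dI dR q x] run \<open>s \<noteq> []\<close>
      by (cases s; cases "pending_calls Call Ret x") auto
    with snoc.prems(2) that(1) show ?thesis unfolding match_closed_def by blast
  qed
  moreover have "dvpa_run Call Ret dC dR dI (q, []) (map h x) = (q', unmark s)"
    using snoc.IH match_closed_prefix[OF snoc.prems(2)] snoc.prems(1) run by simp
  ultimately show ?case
    using hide_step[of a S h Call Ret s] hS hid S snoc.prems(1) run
    by (simp add: dvpa_run_append)
qed (simp add: unmark_def)

lemma vpoI:
  assumes "is_dvpa A Call Ret Q \<Gamma> q0 dC dR dI" and "\<forall>q\<in>Q. strict_total_on A (ord q)"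
  shows "vpo A Call Ret (\<lambda>w. ord (fst (dvpa_run Call Ret dC dR dI (q0, []) w)))"
  unfolding vpo_def using assms by blast

definition pullback_order
    :: "('a \<Rightarrow> 'a \<Rightarrow> bool) \<Rightarrow> ('a \<Rightarrow> 'a) \<Rightarrow> ('a \<Rightarrow> nat) \<Rightarrow> 'a \<Rightarrow> 'a \<Rightarrow> bool" where
  "pullback_order ord h f a b \<longleftrightarrow> ord (h a) (h b) \<or> (h a = h b \<and> f a < f b)"

lemma strict_total_on_pullback_order:
  assumes ord: "strict_total_on A ord" and hA: "h ` A \<subseteq> A" and f: "inj_on f A"
  shows "strict_total_on A (pullback_order ord h f)"
  unfolding strict_total_on_def
proof (intro conjI ballI impI)
  fix a assume "a \<in> A"
  then show "\<not> pullback_order ord h f a a"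
    using ord hA unfolding strict_total_on_def pullback_order_def by blast
next
  fix a b c assume "a \<in> A" "b \<in> A" "c \<in> A"
    and "pullback_order ord h f a b" "pullback_order ord h f b c"
  moreover have "ord (h a) (h b) \<Longrightarrow> ord (h b) (h c) \<Longrightarrow> ord (h a) (h c)"
    using ord hA calculation(1-3) unfolding strict_total_on_def by blast
  ultimately show "pullback_order ord h f a c"
    unfolding pullback_order_def by auto
next
  fix a b assume "a \<in> A" "b \<in> A" "a \<noteq> b"
  moreover have "f a \<noteq> f b" using f calculation inj_on_eq_iff by metis
  moreover have "h a \<noteq> h b \<Longrightarrow> ord (h a) (h b) \<or> ord (h b) (h a)"
    using ord hA calculation(1,2) unfolding strict_total_on_def by blast
  ultimately show "pullback_order ord h f a b \<or> pullback_order ord h f b a"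
    unfolding pullback_order_def by (cases "h a = h b") auto
qed

lemma vpo_pullback_hide:
  assumes dv: "is_dvpa A Call Ret Q \<Gamma> q0 dC dR dI" and ord: "\<forall>q\<in>Q. strict_total_on A (ord q)"
    and hS: "\<forall>a\<in>A \<inter> S. h a \<in> A - Call - Ret" and hA: "h ` A \<subseteq> A" and f: "inj_on f A"
  shows "vpo A Call Ret (\<lambda>w. pullback_order
           (ord (fst (dvpa_run Call Ret (hide_call S h dC dI) (hide_ret S h dR dI) dI (q0, []) w))) h f)"
  using vpoI[OF is_dvpa_hide[OF dv hS], where ord = "\<lambda>q. pullback_order (ord q) h f"]
    strict_total_on_pullback_order[OF _ hA f] ord by blast

section \<open>Trace equivalence and reduction\<close>

lemma trace_eq_filter_eq:
  assumes disj: "\<forall>i<n. \<forall>j<n. i \<noteq> j \<longrightarrow> Sig i \<inter> Sig j = {}"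
    and i: "i < n" and "trace_eq n Sig u w"
  shows "filter (\<lambda>a. a \<in> Sig i) u = filter (\<lambda>a. a \<in> Sig i) w"
  using assms(3) unfolding trace_eq_def
proof (induction rule: rtranclp_induct)
  case (step y z)
  then obtain u v a b where ab: "indep n Sig a b" and "y = u @ [a, b] @ v" "z = u @ [b, a] @ v"
    unfolding swap_step_def by blast
  moreover have "\<not> (a \<in> Sig i \<and> b \<in> Sig i)"
    using ab disj i unfolding indep_def by blast
  ultimately show ?case using step.IH by auto
qed simp

lemma trace_eq_first_difference:
  assumes disj: "\<forall>i<n. \<forall>j<n. i \<noteq> j \<longrightarrow> Sig i \<inter> Sig j = {}"
    and "trace_eq n Sig (\<alpha> @ a # \<beta>) (\<alpha> @ b # \<gamma>)" and "i < n" "a \<in> Sig i" "b \<in> Sig i"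
  shows "a = b"
  using trace_eq_filter_eq[OF disj assms(3,2)] assms(4,5) by simp

lemma red_cong:
  assumes "\<And>\<alpha> a \<beta> b \<gamma>. \<alpha> @ a # \<beta> \<in> L \<Longrightarrow> \<alpha> @ b # \<gamma> \<in> L \<Longrightarrow>
             trace_eq n Sig (\<alpha> @ a # \<beta>) (\<alpha> @ b # \<gamma>) \<Longrightarrow> prec \<alpha> a b \<longleftrightarrow> prec' \<alpha> a b"
  shows "red n Sig prec L = red n Sig prec' L"
  unfolding red_def ctx_le_def using assms by blast

lemma trace_eq_first_difference_image:
  assumes disj: "\<forall>i<n. \<forall>j<n. i \<noteq> j \<longrightarrow> Sig i \<inter> Sig j = {}"
    and h_Sig: "\<forall>i<n. \<forall>a\<in>Sig i. h a \<in> Sig i"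
    and te: "trace_eq n Sig (\<alpha> @ a # \<beta>) (\<alpha> @ b # \<gamma>)"
    and "a \<in> SigU n Sig" "b \<in> SigU n Sig" and "h a = h b"
  shows "a = b"
proof -
  obtain i j where ij: "i < n" "j < n" "a \<in> Sig i" "b \<in> Sig j"
    using assms(4,5) unfolding SigU_def by blast
  with h_Sig disj \<open>h a = h b\<close> have "b \<in> Sig i" by (metis disjoint_iff)
  with trace_eq_first_difference[OF disj te] ij show ?thesis by blast
qed

lemma red_bowtie_pullback_hide:
  assumes disj: "\<forall>i<n. \<forall>j<n. i \<noteq> j \<longrightarrow> Sig i \<inter> Sig j = {}"
    and S_match: "\<forall>i<n. \<forall>c\<in>Sig i. \<forall>r\<in>Sig i.
                    matching_letters_in Call Ret (P i) c r \<longrightarrow> (c \<in> S \<longleftrightarrow> r \<in> S)"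
    and S: "S \<subseteq> Call \<union> Ret" and h_Sig: "\<forall>i<n. \<forall>a\<in>Sig i. h a \<in> Sig i"
    and hS: "\<forall>a\<in>SigU n Sig \<inter> S. h a \<notin> Call \<and> h a \<notin> Ret" and hid: "\<forall>a\<in>SigU n Sig - S. h a = a"
    and prec: "\<forall>w\<in>lists (SigU n Sig). \<forall>a\<in>SigU n Sig. \<forall>b\<in>SigU n Sig.
                 prec w a b \<longleftrightarrow> ord (fst (dvpa_run Call Ret dC dR dI (q0, []) w)) a b"
  shows "red n Sig (\<lambda>w. pullback_order
             (ord (fst (dvpa_run Call Ret (hide_call S h dC dI) (hide_ret S h dR dI) dI (q0, []) w))) h f)
           (bowtie Call Ret n Sig P)
         = red n Sig (img_order h prec) (bowtie Call Ret n Sig P)"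
proof (rule red_cong)
  let ?A = "SigU n Sig"
  let ?run = "dvpa_run Call Ret (hide_call S h dC dI) (hide_ret S h dR dI) dI (q0, [])"
  fix \<alpha> a \<beta> b \<gamma> assume u: "\<alpha> @ a # \<beta> \<in> bowtie Call Ret n Sig P"
    and w: "\<alpha> @ b # \<gamma> \<in> bowtie Call Ret n Sig P"
    and te: "trace_eq n Sig (\<alpha> @ a # \<beta>) (\<alpha> @ b # \<gamma>)"
  have \<alpha>: "\<alpha> \<in> lists ?A" and ab: "a \<in> ?A" "b \<in> ?A"
    using u w unfolding bowtie_def shuffle_def by auto
  have "match_closed Call Ret S \<alpha>"
    using bowtie_match_closed[OF disj S_match w] match_closed_prefix by blast
  then have "fst (?run \<alpha>) = fst (dvpa_run Call Ret dC dR dI (q0, []) (map h \<alpha>))"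
    using hide_run_simulates[OF hS hid S \<alpha>] by simp
  moreover have "h ` ?A \<subseteq> ?A" using h_Sig unfolding SigU_def by blast
  then have "map h \<alpha> \<in> lists ?A" "h a \<in> ?A" "h b \<in> ?A" using \<alpha> ab by (auto simp: image_subset_iff)
  ultimately have "img_order h prec \<alpha> a b \<longleftrightarrow> ord (fst (?run \<alpha>)) (h a) (h b)"
    using prec unfolding img_order_def by simp
  moreover have "h a = h b \<Longrightarrow> a = b"
    using trace_eq_first_difference_image[OF disj h_Sig te ab] .
  ultimately show "pullback_order (ord (fst (?run \<alpha>))) h f a b \<longleftrightarrow> img_order h prec \<alpha> a b"
    unfolding pullback_order_def by auto
qed

theorem proposition6p3:
  fixes n :: nat and Sig :: "nat \<Rightarrow> 'a set" and Call Ret Intl :: "'a set"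
    and P :: "nat \<Rightarrow> 'a list set" and Sp :: "'a set" and h :: "'a \<Rightarrow> 'a"
    and prec :: "'a list \<Rightarrow> 'a \<Rightarrow> 'a \<Rightarrow> bool"
  assumes fin: "\<forall>i<n. finite (Sig i)"
    and disj: "\<forall>i<n. \<forall>j<n. i \<noteq> j \<longrightarrow> Sig i \<inter> Sig j = {}"
    and part: "Call \<inter> Ret = {}" "Call \<inter> Intl = {}" "Ret \<inter> Intl = {}"
              "SigU n Sig \<subseteq> Call \<union> Ret \<union> Intl"
    and P: "\<forall>i<n. P i \<subseteq> lists (Sig i) \<and> (\<forall>w\<in>P i. well_matched Call Ret w)
                   \<and> is_vpl (Sig i) Call Ret (P i)"
    and Sp: "Sp \<subseteq> SigU n Sig \<inter> (Call \<union> Ret)"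
    and Sp_match: "\<forall>i<n. \<forall>c\<in>Sig i. \<forall>r\<in>Sig i.
                     matching_letters_in Call Ret (P i) c r \<longrightarrow> (c \<in> Sp \<longleftrightarrow> r \<in> Sp)"
    and h_Sp: "\<forall>i<n. \<forall>a\<in>Sp \<inter> Sig i. h a \<in> Intl \<inter> Sig i"
    and h_id: "\<forall>a\<in>SigU n Sig. a \<notin> Sp \<longrightarrow> h a = a"
    and vp: "vpo (SigU n Sig) Call Ret prec"
  shows "\<exists>prec'. vpo (SigU n Sig) Call Ret prec' \<and>
           red n Sig prec' (bowtie Call Ret n Sig P)
             = red n Sig (img_order h prec) (bowtie Call Ret n Sig P)"
proof -
  define A where "A = SigU n Sig"
  obtain Q \<Gamma> q0 dC dR dI ord where dv: "is_dvpa A Call Ret Q \<Gamma> q0 dC dR dI"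
      and ord: "\<forall>q\<in>Q. strict_total_on A (ord q)"
      and prec: "\<forall>w\<in>lists A. \<forall>a\<in>A. \<forall>b\<in>A.
                   prec w a b \<longleftrightarrow> ord (fst (dvpa_run Call Ret dC dR dI (q0, []) w)) a b"
    using vp unfolding vpo_def A_def by blast
  have "finite A" using fin unfolding A_def SigU_def by simp
  then obtain f :: "'a \<Rightarrow> nat" where f: "inj_on f A"
    using finite_imp_inj_to_nat_seg by blast
  have h_Sig: "\<forall>i<n. \<forall>a\<in>Sig i. h a \<in> Sig i"
  proof (intro allI impI ballI)
    fix i a assume "i < n" "a \<in> Sig i"
    then show "h a \<in> Sig i" using h_Sp h_id unfolding SigU_def by (cases "a \<in> Sp") auto
  qed
  then have hA: "h ` A \<subseteq> A" unfolding A_def SigU_def by blast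
  have hS: "\<forall>a\<in>A \<inter> Sp. h a \<in> A - Call - Ret" and hid: "\<forall>a\<in>A - Sp. h a = a"
    using h_Sp h_id hA part(2,3) unfolding A_def SigU_def by blast+
  have "Sp \<subseteq> Call \<union> Ret" and "\<forall>a\<in>A \<inter> Sp. h a \<notin> Call \<and> h a \<notin> Ret"
    using Sp hS by blast+
  from red_bowtie_pullback_hide[OF disj Sp_match this(1) h_Sig this(2)[unfolded A_def]
      hid[unfolded A_def] prec[unfolded A_def]] vpo_pullback_hide[OF dv ord hS hA f]
  show ?thesis unfolding A_def by blast
qed

end
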